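(* Let $C\subseteq(\mathbb{R}^d,\operatorname{dist})$ be the attractor of an iterated function system of finitely many maps $f_i(x)=\lambda_i x+t_i$ with $\lambda_i\in(0,1)$ and $t_i\in\mathbb{R}^d$, such that $f_i(B[0,1])\subseteq B[0,1]$ for all $i$. For a word $I=i_1\cdots i_k$ let $S_I:=f_{i_1}\circ\cdots\circ f_{i_k}(B[0,1])$ (so $S_\emptyset=B[0,1]$, $S_i=B[t_i,\lambda_i]$). Then: (1) if $S_\emptyset\setminus\bigcup_i S_i\neq\emptyset$, \[h_\emptyset\le\max_{x\in S_\emptyset\setminus\bigcup_iS_i}\ \min_i\frac{\operatorname{dist}(x,t_i)-\lambda_i}{1-\lambda_i};\] (2) $\tau(C,\{S_I\}_I)\ge\frac{\min_j\lambda_j}{h_\emptyset}$; (3) the system $\{S_I\}_I$ is $(2\max_i\lambda_i+h_\emptyset)$-uniformly dense.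
   Context: $\mathbb{R}^d$ carries a distance $\operatorname{dist}$ induced by a norm; $B[x,\rho]$ is the closed ball of center $x$ and radius $\rho$. A system of balls for a compact set $C$ is a family $\{S_I\}_I$ of closed balls indexed by finite words with each $S_I$ containing its finitely many children $S_{I,j}$, $C=\bigcap_{n\ge0}\bigcup_{\ell(I)=n}S_I$, and radii tending to $0$ along every infinite branch. $h_I:=\max_{x\in S_I}\operatorname{dist}(x,C)$; thickness $\tau(C,\{S_I\}_I):=\inf_I\frac{\min_i\operatorname{rad}(S_{I,i})}{h_I}$. The system is $r$-uniformly dense if for every $I$ and every ball $B\subseteq S_I$ with $\operatorname{rad}(B)\ge r\operatorname{rad}(S_I)$ there is a child $S_{I,i}\subseteq B$. *)

theory Defs
  imports "HOL-Analysis.Analysis"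
begin

text \<open>Ambient space: a finite-dimensional real normed space, i.e. R^d with a distance
induced by an arbitrary norm (class heine_borel forces finite dimension).
Words over the finite alphabet A are lists I with set I \<subseteq> A; the children of I are
I @ [i] for i in A. Balls of a system are given as sets S I together with radii rad I.\<close>

definition ifs_map :: "('i \<Rightarrow> real) \<Rightarrow> ('i \<Rightarrow> 'a::real_normed_vector) \<Rightarrow> 'i \<Rightarrow> 'a \<Rightarrow> 'a" where
  "ifs_map lam t i x = lam i *\<^sub>R x + t i"

definition word_map :: "('i \<Rightarrow> real) \<Rightarrow> ('i \<Rightarrow> 'a::real_normed_vector) \<Rightarrow> 'i list \<Rightarrow> 'a \<Rightarrow> 'a" where
  "word_map lam t I = foldr (\<lambda>i g. ifs_map lam t i \<circ> g) I id"

definition ifs_ball :: "('i \<Rightarrow> real) \<Rightarrow> ('i \<Rightarrow> 'a::real_normed_vector) \<Rightarrow> 'i list \<Rightarrow> 'a set" where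
  "ifs_ball lam t I = word_map lam t I ` cball 0 1"

definition ifs_rad :: "('i \<Rightarrow> real) \<Rightarrow> 'i list \<Rightarrow> real" where
  "ifs_rad lam I = prod_list (map lam I)"

definition is_attractor :: "'i set \<Rightarrow> ('i \<Rightarrow> 'a::metric_space \<Rightarrow> 'a) \<Rightarrow> 'a set \<Rightarrow> bool" where
  "is_attractor A f C \<longleftrightarrow> compact C \<and> C \<noteq> {} \<and> C = (\<Union>i\<in>A. f i ` C)"

definition hgap :: "'a::metric_space set \<Rightarrow> 'a set \<Rightarrow> real" where
  "hgap C S = (SUP x\<in>S. infdist x C)"

text \<open>Thickness, valued in extended reals (a ratio with h_I = 0 counts as +infinity).\<close>
definition thickness :: "'i set \<Rightarrow> ('i list \<Rightarrow> 'a::metric_space set) \<Rightarrow> ('i list \<Rightarrow> real) \<Rightarrow> 'a set \<Rightarrow> ereal" where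
  "thickness A S rad C =
     (INF I\<in>{I. set I \<subseteq> A}. ereal (Min ((\<lambda>i. rad (I @ [i])) ` A)) / ereal (hgap C (S I)))"

definition uniformly_dense :: "'i set \<Rightarrow> ('i list \<Rightarrow> 'a::metric_space set) \<Rightarrow> ('i list \<Rightarrow> real) \<Rightarrow> real \<Rightarrow> bool" where
  "uniformly_dense A S rad r \<longleftrightarrow>
     (\<forall>I. set I \<subseteq> A \<longrightarrow> (\<forall>y \<rho>. cball y \<rho> \<subseteq> S I \<and> \<rho> \<ge> r * rad I \<longrightarrow>
        (\<exists>i\<in>A. S (I @ [i]) \<subseteq> cball y \<rho>)))"

end

theory Submission
  imports Defs
begin

text \<open>Each f_I is a similarity of ratio rad I sending C into C, so it contracts the distance
to C by that ratio; hence h_I \<le> rad I * h, while the children of S_I have radius rad I * \<lambda>_i,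
which gives the thickness bound. For the bound on h, take a point x of B[0,1] farthest from C.
Points of S_i are within \<lambda>_i h of C, so if h > 0 the point x lies outside every S_i, and
passing through the point of S_i nearest to x gives h \<le> dist(x,t_i) - \<lambda>_i + \<lambda>_i h.
For uniform density, the centre of a ball inside S_I is f_I(y) with y within h of a point
f_i(c) of C; then S_i lies within 2\<lambda>_i + h of y, and S_{I i} = f_I(S_i) lies in the ball.\<close>

lemma word_map_Nil [simp]: "word_map lam t [] = id"
  by (simp add: word_map_def)

lemma word_map_Cons [simp]: "word_map lam t (i # I) = ifs_map lam t i \<circ> word_map lam t I"
  by (simp add: word_map_def)

lemma word_map_snoc: "word_map lam t (I @ [i]) = word_map lam t I \<circ> ifs_map lam t i"
  by (induction I) (simp_all add: comp_assoc)

lemma ifs_rad_Nil [simp]: "ifs_rad lam [] = 1"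
  and ifs_rad_Cons [simp]: "ifs_rad lam (i # I) = lam i * ifs_rad lam I"
  and ifs_rad_snoc [simp]: "ifs_rad lam (I @ [i]) = ifs_rad lam I * lam i"
  by (simp_all add: ifs_rad_def)

lemma ifs_rad_pos: "(\<And>i. i \<in> set I \<Longrightarrow> 0 < lam i) \<Longrightarrow> 0 < ifs_rad lam I"
  by (induction I) auto

lemma word_map_affine: "word_map lam t I x = ifs_rad lam I *\<^sub>R x + word_map lam t I 0"
  by (induction I) (auto simp: ifs_map_def algebra_simps)

lemma dist_word_map:
  "dist (word_map lam t I x) (word_map lam t I y) = \<bar>ifs_rad lam I\<bar> * dist x y"
  by (subst (1 2) word_map_affine) (simp add: dist_norm flip: scaleR_diff_right)

lemma ifs_ball_Nil [simp]: "ifs_ball lam t [] = cball 0 1"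
  by (simp add: ifs_ball_def)

lemma ifs_ball_eq_cball:
  assumes "0 < ifs_rad lam I"
  shows "ifs_ball lam t I = cball (word_map lam t I 0) (ifs_rad lam I)"
proof -
  have "word_map lam t I = (+) (word_map lam t I 0) \<circ> (\<lambda>x. ifs_rad lam I *\<^sub>R x)"
    by (rule ext, subst word_map_affine) (simp add: add.commute)
  then have "ifs_ball lam t I = (+) (word_map lam t I 0) ` (\<lambda>x. ifs_rad lam I *\<^sub>R x) ` cball 0 1"
    by (simp add: ifs_ball_def image_comp)
  then show ?thesis
    using assms by (simp add: cball_scale)
qed

lemma cball_subset_cball_of_dist:
  "dist a b + r \<le> s \<Longrightarrow> cball a r \<subseteq> cball (b :: 'a::metric_space) s"
  by (smt (verit, best) dist_triangle3 mem_cball subsetI)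

lemma infdist_image_le:
  fixes C :: "'a::heine_borel set"
  assumes "closed C" "C \<noteq> {}" "f ` C \<subseteq> C"
    and "0 \<le> L" "\<And>y. dist (f x) (f y) \<le> L * dist x y"
  shows "infdist (f x) C \<le> L * infdist x C"
proof -
  obtain c where c: "c \<in> C" "infdist x C = dist x c"
    using infdist_attains_inf[OF assms(1,2)] by blast
  have "infdist (f x) C \<le> dist (f x) (f c)"
    using c(1) assms(3) by (blast intro: infdist_le)
  also have "\<dots> \<le> L * infdist x C"
    using assms(5) c(2) by simp
  finally show ?thesis .
qed

lemma bdd_above_infdist:
  assumes "bounded S" "C \<noteq> {}"
  shows "bdd_above ((\<lambda>x. infdist x C) ` S)"
proof -
  obtain c where "c \<in> C" using assms(2) by blast
  moreover obtain e where "\<forall>x\<in>S. dist c x \<le> e"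
    using assms(1) bounded_any_center by blast
  ultimately show ?thesis
    by (intro bdd_aboveI2[of _ _ e]) (metis dist_commute infdist_le2)
qed

lemma infdist_le_hgap: "bounded S \<Longrightarrow> C \<noteq> {} \<Longrightarrow> x \<in> S \<Longrightarrow> infdist x C \<le> hgap C S"
  unfolding hgap_def by (rule cSUP_upper2[OF bdd_above_infdist]) auto

lemma hgap_nonneg: "bounded S \<Longrightarrow> S \<noteq> {} \<Longrightarrow> C \<noteq> {} \<Longrightarrow> 0 \<le> hgap C S"
  by (meson ex_in_conv infdist_le_hgap infdist_nonneg order_trans)

lemma hgap_attained:
  assumes "compact S" "S \<noteq> {}" "C \<noteq> {}"
  obtains x where "x \<in> S" "hgap C S = infdist x C"
proof -
  obtain x where x: "x \<in> S" "\<forall>y\<in>S. infdist y C \<le> infdist x C"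
    using continuous_attains_sup[OF assms(1,2) continuous_on_infdist[OF continuous_on_id]]
    by blast
  have "hgap C S = infdist x C"
    using x assms unfolding hgap_def
    by (intro antisym cSUP_least cSUP_upper2[OF bdd_above_infdist]) (auto simp: compact_imp_bounded)
  with x(1) show thesis by (rule that)
qed

lemma hgap_image_le:
  assumes "bounded S" "S \<noteq> {}" "C \<noteq> {}" "0 \<le> L"
    and "\<And>x. x \<in> S \<Longrightarrow> infdist (f x) C \<le> L * infdist x C"
  shows "hgap C (f ` S) \<le> L * hgap C S"
  unfolding hgap_def [of C "f ` S"]
proof (rule cSUP_least)
  fix y assume "y \<in> f ` S"
  then obtain x where "x \<in> S" "y = f x" by blast
  then show "infdist y C \<le> L * hgap C S"
    using assms infdist_le_hgap by (metis mult_left_mono order_trans)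
qed (use assms(2) in simp)

lemma ereal_divide_le_rescaled:
  fixes m M r h h' :: real
  assumes "0 < m" "0 < r" "r * m \<le> M" "0 \<le> h'" "h' \<le> r * h"
  shows "ereal m / ereal h \<le> ereal M / ereal h'"
proof -
  have "0 < r * m" using assms by simp
  with assms have "0 < M" by linarith
  show ?thesis
  proof (cases "h' = 0")
    case True
    with \<open>0 < M\<close> show ?thesis by simp
  next
    case False
    with assms have "0 < h'" by simp
    with assms have "0 < r * h" by linarith
    with assms have "0 < h" by (simp add: zero_less_mult_iff)
    have "m / h = (r * m) / (r * h)" using \<open>0 < r\<close> by simp
    also have "\<dots> \<le> M / h'"
      using assms \<open>0 < h'\<close> \<open>0 < M\<close> by (intro frac_le) auto
    finally show ?thesis using \<open>0 < h'\<close> \<open>0 < h\<close> by simp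
  qed
qed

lemma norm_add_radius_le_of_cball_subset:
  fixes a :: "'a::real_normed_vector"
  assumes "cball a r \<subseteq> cball 0 R" "0 \<le> r" "a \<noteq> 0"
  shows "norm a + r \<le> R"
proof -
  define p where "p = a + (r / norm a) *\<^sub>R a"
  have "p \<in> cball a r"
    using assms(2,3) by (simp add: p_def dist_norm)
  moreover have "norm p = norm a + r"
  proof -
    have "p = (1 + r / norm a) *\<^sub>R a" by (simp add: p_def algebra_simps)
    moreover have "0 \<le> 1 + r / norm a" using assms(2) by simp
    ultimately show ?thesis using assms(3) by (simp add: field_simps)
  qed
  ultimately show ?thesis using assms(1) by auto
qed

locale unit_ball_ifs =
  fixes A :: "'i set" and lam :: "'i \<Rightarrow> real"
    and t :: "'i \<Rightarrow> 'a::{real_normed_vector, heine_borel}" and C :: "'a set"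
  assumes finite_A: "finite A" and A_nonempty: "A \<noteq> {}"
    and lam_pos: "i \<in> A \<Longrightarrow> 0 < lam i" and lam_less_1: "i \<in> A \<Longrightarrow> lam i < 1"
    and maps_unit_ball: "i \<in> A \<Longrightarrow> ifs_map lam t i ` cball 0 1 \<subseteq> cball 0 1"
    and attractor: "is_attractor A (ifs_map lam t) C"
begin

abbreviation S :: "'i list \<Rightarrow> 'a set" where
  "S \<equiv> ifs_ball lam t"

abbreviation gap :: real where
  "gap \<equiv> hgap C (cball 0 1)"

lemma compact_C: "compact C" and C_nonempty: "C \<noteq> {}"
  and C_eq: "C = (\<Union>i\<in>A. ifs_map lam t i ` C)"
  using attractor unfolding is_attractor_def by auto

lemma word_rad_pos: "set I \<subseteq> A \<Longrightarrow> 0 < ifs_rad lam I"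
  using lam_pos by (blast intro: ifs_rad_pos)

lemma word_map_image_C: "set I \<subseteq> A \<Longrightarrow> word_map lam t I ` C \<subseteq> C"
proof (induction I)
  case (Cons i I)
  then have "ifs_map lam t i ` word_map lam t I ` C \<subseteq> ifs_map lam t i ` C" "i \<in> A"
    by auto
  then show ?case using C_eq by (auto simp: image_comp)
qed simp

lemma infdist_word_map_le:
  assumes "set I \<subseteq> A"
  shows "infdist (word_map lam t I x) C \<le> ifs_rad lam I * infdist x C"
proof (rule infdist_image_le)
  show "closed C" by (simp add: compact_C compact_imp_closed)
  show "0 \<le> ifs_rad lam I" using word_rad_pos[OF assms] by simp
  then show "dist (word_map lam t I x) (word_map lam t I y) \<le> ifs_rad lam I * dist x y" for y
    by (simp add: dist_word_map)
qed (use C_nonempty word_map_image_C[OF assms] in auto)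

lemma infdist_le_gap: "x \<in> cball 0 1 \<Longrightarrow> infdist x C \<le> gap"
  using C_nonempty by (intro infdist_le_hgap) auto

lemma gap_nonneg: "0 \<le> gap"
  using C_nonempty by (intro hgap_nonneg) auto

lemma hgap_ifs_ball_le: "set I \<subseteq> A \<Longrightarrow> hgap C (S I) \<le> ifs_rad lam I * gap"
  unfolding ifs_ball_def using C_nonempty word_rad_pos[of I] infdist_word_map_le[of I]
  by (intro hgap_image_le) auto

lemma hgap_ifs_ball_nonneg: "set I \<subseteq> A \<Longrightarrow> 0 \<le> hgap C (S I)"
  using C_nonempty word_rad_pos[of I] ifs_ball_eq_cball[of lam I t]
  by (intro hgap_nonneg) auto

lemma ifs_ball_single: "i \<in> A \<Longrightarrow> S [i] = cball (t i) (lam i)"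
  using lam_pos[of i] ifs_ball_eq_cball[of lam "[i]" t] by (simp add: ifs_map_def)

lemma infdist_child_le: "i \<in> A \<Longrightarrow> x \<in> S [i] \<Longrightarrow> infdist x C \<le> lam i * gap"
  using infdist_word_map_le[of "[i]"] infdist_le_gap lam_pos[of i]
  by (fastforce simp: ifs_ball_def intro: order_trans mult_left_mono)

lemma norm_translation_le: "i \<in> A \<Longrightarrow> norm (t i) \<le> 1 - lam i"
  using maps_unit_ball[of i] lam_pos[of i] lam_less_1[of i] ifs_ball_single[of i]
    norm_add_radius_le_of_cball_subset[of "t i" "lam i" 1]
  by (cases "t i = 0") (auto simp: ifs_ball_def)

lemma infdist_le_outside_child:
  assumes i: "i \<in> A" and far: "lam i \<le> dist x (t i)"
  shows "infdist x C \<le> dist x (t i) - lam i + lam i * gap"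
proof -
  define d where "d = dist x (t i)"
  have d: "0 < d" using lam_pos[OF i] far unfolding d_def by linarith
  \<comment> \<open>the point of S [i] nearest to x\<close>
  define p where "p = t i + (lam i / d) *\<^sub>R (x - t i)"
  have "p \<in> S [i]"
    using d lam_pos[OF i] by (simp add: ifs_ball_single[OF i] p_def d_def dist_norm)
  then have "infdist p C \<le> lam i * gap" by (rule infdist_child_le[OF i])
  moreover have "dist x p = d - lam i"
  proof -
    have "x - p = (1 - lam i / d) *\<^sub>R (x - t i)" by (simp add: p_def algebra_simps)
    moreover have "0 \<le> 1 - lam i / d" using far d by (simp add: d_def field_simps)
    ultimately have "dist x p = (1 - lam i / d) * d" by (simp add: dist_norm d_def)
    also have "\<dots> = d - lam i" using d by (simp add: field_simps)
    finally show ?thesis .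
  qed
  ultimately show ?thesis
    using infdist_triangle[of x C p] by (simp add: d_def)
qed

lemma gap_le_escape_ratio:
  assumes "gap = infdist x C" and far: "\<And>i. i \<in> A \<Longrightarrow> lam i \<le> dist x (t i)"
  shows "gap \<le> Min ((\<lambda>i. (dist x (t i) - lam i) / (1 - lam i)) ` A)"
proof -
  have "gap \<le> (dist x (t i) - lam i) / (1 - lam i)" if i: "i \<in> A" for i
  proof -
    have "gap * (1 - lam i) \<le> dist x (t i) - lam i"
      using infdist_le_outside_child[OF i far[OF i]] assms(1) by (simp add: algebra_simps)
    then show ?thesis using lam_less_1[OF i] by (simp add: pos_le_divide_eq)
  qed
  then show ?thesis using finite_A A_nonempty by simp
qed

lemma gap_le_Sup_escape_ratio:
  fixes U :: "'a set" and g :: "'a \<Rightarrow> real"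
  defines "U \<equiv> cball 0 1 - (\<Union>i\<in>A. S [i])"
    and "g \<equiv> \<lambda>x. Min ((\<lambda>i. (dist x (t i) - lam i) / (1 - lam i)) ` A)"
  assumes "U \<noteq> {}"
  shows "gap \<le> (SUP x\<in>U. g x)"
proof -
  have far: "lam i < dist x (t i)" if "x \<in> U" "i \<in> A" for x i
    using that ifs_ball_single[of i] by (auto simp: U_def dist_commute)
  obtain i0 where i0: "i0 \<in> A" using A_nonempty by blast
  have "g x \<le> 2 / (1 - lam i0)" if x: "x \<in> U" for x
  proof -
    have "dist x (t i0) \<le> norm x + norm (t i0)" by (simp add: dist_norm norm_triangle_ineq4)
    also have "\<dots> \<le> 2" using x norm_translation_le[OF i0] lam_pos[OF i0] by (simp add: U_def)
    finally have "dist x (t i0) - lam i0 \<le> 2" using lam_pos[OF i0] by simp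
    then have "(dist x (t i0) - lam i0) / (1 - lam i0) \<le> 2 / (1 - lam i0)"
      using lam_less_1[OF i0] by (simp add: divide_right_mono)
    moreover have "g x \<le> (dist x (t i0) - lam i0) / (1 - lam i0)"
      using finite_A i0 by (simp add: g_def)
    ultimately show ?thesis by linarith
  qed
  then have le_Sup: "x \<in> U \<Longrightarrow> g x \<le> (SUP x\<in>U. g x)" for x
    by (intro cSUP_upper bdd_aboveI2) auto
  obtain x0 where x0: "x0 \<in> cball 0 1" "gap = infdist x0 C"
    using hgap_attained[of "cball 0 1" C] C_nonempty by auto
  show ?thesis
  proof (cases "gap = 0")
    case True
    obtain u where u: "u \<in> U" using assms(3) by blast
    have "0 < g u"
      using finite_A A_nonempty far[OF u] lam_less_1 by (simp add: g_def)
    also have "\<dots> \<le> (SUP x\<in>U. g x)" by (rule le_Sup[OF u])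
    finally show ?thesis using True by simp
  next
    case False
    \<comment> \<open>x0 is farthest from C, while points of S [i] are within lam i * gap of C\<close>
    have "x0 \<in> U"
    proof -
      have "x0 \<notin> S [i]" if i: "i \<in> A" for i
      proof
        assume "x0 \<in> S [i]"
        then have "gap \<le> lam i * gap" using infdist_child_le[OF i] x0(2) by simp
        then show False using False gap_nonneg lam_less_1[OF i] by (simp add: mult_le_cancel_right1)
      qed
      with x0(1) show ?thesis by (simp add: U_def)
    qed
    have "lam i \<le> dist x0 (t i)" if "i \<in> A" for i
      using far[OF \<open>x0 \<in> U\<close> that] by simp
    then have "gap \<le> g x0"
      unfolding g_def by (rule gap_le_escape_ratio[OF x0(2)])
    also have "\<dots> \<le> (SUP x\<in>U. g x)" by (rule le_Sup[OF \<open>x0 \<in> U\<close>])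
    finally show ?thesis .
  qed
qed

lemma thickness_ifs_balls_ge:
  "ereal (Min (lam ` A)) / ereal gap \<le> thickness A S (ifs_rad lam) C"
  unfolding thickness_def
proof (rule INF_greatest)
  fix I assume "I \<in> {I. set I \<subseteq> A}"
  then have I: "set I \<subseteq> A" by simp
  have "ifs_rad lam I * Min (lam ` A) \<le> Min ((\<lambda>i. ifs_rad lam (I @ [i])) ` A)"
    using finite_A A_nonempty word_rad_pos[OF I] by simp
  then show "ereal (Min (lam ` A)) / ereal gap
      \<le> ereal (Min ((\<lambda>i. ifs_rad lam (I @ [i])) ` A)) / ereal (hgap C (S I))"
    using finite_A A_nonempty lam_pos word_rad_pos[OF I]
      hgap_ifs_ball_nonneg[OF I] hgap_ifs_ball_le[OF I]
    by (intro ereal_divide_le_rescaled) auto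
qed


lemma attractor_subset_unit_ball: "C \<subseteq> cball 0 1"
proof -
  obtain c where c: "c \<in> C" "\<forall>y\<in>C. norm y \<le> norm c"
    using continuous_attains_sup[OF compact_C C_nonempty continuous_on_norm_id] by blast
  then obtain i c' where i: "i \<in> A" "c' \<in> C" "c = ifs_map lam t i c'"
    using C_eq by blast
  have "norm c \<le> lam i * norm c' + norm (t i)"
    using i(3) lam_pos[OF i(1)] norm_triangle_ineq[of "lam i *\<^sub>R c'" "t i"]
    by (simp add: ifs_map_def)
  also have "\<dots> \<le> lam i * norm c + (1 - lam i)"
    using c(2) i(2) lam_pos[OF i(1)] norm_translation_le[OF i(1)]
    by (intro add_mono mult_left_mono) auto
  finally have "norm c * (1 - lam i) \<le> 1 * (1 - lam i)"
    by (simp add: algebra_simps)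
  then have "norm c \<le> 1"
    using lam_less_1[OF i(1)] by (simp only: mult_le_cancel_right_pos diff_gt_0_iff_gt)
  with c(2) show ?thesis by auto
qed

lemma near_child_center: "y \<in> cball 0 1 \<Longrightarrow> \<exists>i\<in>A. dist y (t i) \<le> lam i + gap"
proof -
  assume y: "y \<in> cball 0 1"
  obtain c where c: "c \<in> C" "infdist y C = dist y c"
    using infdist_attains_inf[OF compact_imp_closed[OF compact_C] C_nonempty] by blast
  then obtain i c' where i: "i \<in> A" "c' \<in> C" "c = ifs_map lam t i c'"
    using C_eq by blast
  have "dist c (t i) = lam i * norm c'"
    using i(3) lam_pos[OF i(1)] by (simp add: ifs_map_def dist_norm)
  also have "\<dots> \<le> lam i"
    using attractor_subset_unit_ball i(2) lam_pos[OF i(1)] by (auto intro: mult_left_le)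
  finally have "dist y (t i) \<le> lam i + infdist y C"
    using c(2) dist_triangle[of y "t i" c] by linarith
  with infdist_le_gap[OF y] i(1) show ?thesis by force
qed

lemma uniformly_dense_ifs_balls:
  "uniformly_dense A S (ifs_rad lam) (2 * Max (lam ` A) + gap)"
  unfolding uniformly_dense_def
proof (intro allI impI)
  fix I y \<rho>
  assume I: "set I \<subseteq> A"
    and y\<rho>: "cball y \<rho> \<subseteq> S I \<and> (2 * Max (lam ` A) + gap) * ifs_rad lam I \<le> \<rho>"
  define r where "r = ifs_rad lam I"
  have r: "0 < r" using word_rad_pos[OF I] by (simp add: r_def)
  have Max_ge: "lam i \<le> Max (lam ` A)" if "i \<in> A" for i
    using finite_A that by simp
  obtain i0 where "i0 \<in> A" using A_nonempty by blast
  then have "0 \<le> Max (lam ` A)" using lam_pos Max_ge by (meson less_le_trans less_imp_le)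
  then have "0 \<le> (2 * Max (lam ` A) + gap) * r" using gap_nonneg r by simp
  with y\<rho> have "y \<in> S I" by (auto simp: r_def)
  then obtain y' where y': "y' \<in> cball 0 1" "y = word_map lam t I y'"
    by (auto simp: ifs_ball_def)
  obtain i where i: "i \<in> A" "dist y' (t i) \<le> lam i + gap"
    using near_child_center[OF y'(1)] by blast
  have child: "S (I @ [i]) = cball (word_map lam t I (t i)) (r * lam i)"
    using ifs_ball_eq_cball[of lam "I @ [i]" t] word_rad_pos[of "I @ [i]"] I i(1)
    by (simp add: r_def word_map_snoc ifs_map_def)
  have "dist (word_map lam t I (t i)) y + r * lam i = r * (dist (t i) y' + lam i)"
    using y'(2) r by (simp add: dist_word_map r_def algebra_simps)
  also have "\<dots> \<le> r * (2 * Max (lam ` A) + gap)"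
    using i Max_ge[OF i(1)] r by (simp add: dist_commute)
  also have "\<dots> \<le> \<rho>" using y\<rho> by (simp add: r_def mult.commute)
  finally have "S (I @ [i]) \<subseteq> cball y \<rho>"
    unfolding child by (rule cball_subset_cball_of_dist)
  with i(1) show "\<exists>i\<in>A. S (I @ [i]) \<subseteq> cball y \<rho>" by blast
qed

end

theorem lemma4p1:
  fixes A :: "'i set" and lam :: "'i \<Rightarrow> real"
    and t :: "'i \<Rightarrow> 'a::{real_normed_vector, heine_borel}" and C :: "'a set"
  assumes "finite A" and "A \<noteq> {}"
    and "\<forall>i\<in>A. 0 < lam i \<and> lam i < 1"
    and "\<forall>i\<in>A. ifs_map lam t i ` cball 0 1 \<subseteq> cball 0 1"
    and "is_attractor A (ifs_map lam t) C"
  shows "(ifs_ball lam t [] - (\<Union>i\<in>A. ifs_ball lam t [i]) \<noteq> {} \<longrightarrow>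
           hgap C (ifs_ball lam t []) \<le>
             (SUP x\<in>ifs_ball lam t [] - (\<Union>i\<in>A. ifs_ball lam t [i]).
                Min ((\<lambda>i. (dist x (t i) - lam i) / (1 - lam i)) ` A)))
       \<and> thickness A (ifs_ball lam t) (ifs_rad lam) C
           \<ge> ereal (Min (lam ` A)) / ereal (hgap C (ifs_ball lam t []))
       \<and> uniformly_dense A (ifs_ball lam t) (ifs_rad lam)
           (2 * Max (lam ` A) + hgap C (ifs_ball lam t []))"
proof -
  interpret unit_ball_ifs A lam t C
    using assms by unfold_locales auto
  show ?thesis
    using gap_le_Sup_escape_ratio thickness_ifs_balls_ge uniformly_dense_ifs_balls
    by simp
qed

end
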